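(* Let $M$ be a $3$-connected simple matroid with $r(M)\ge 4$, and let $K=x_1,\dots,x_n,y_1,\dots,y_n$ ($n\ge3$) be a carambole of $M$ with filament $L=\{y_1,\dots,y_n\}$. Then $M/L$ is $3$-connected. In particular, every triangle of $M$ that meets $\{x_1,\dots,x_n,y_1,\dots,y_n\}$ is contained in $L$.
   Context: A line of $M$ is a rank-$2$ set. For $n\ge3$, a sequence $x_1,\dots,x_n,y_1,\dots,y_n$ of elements of $M$ is a carambole of $M$ if $L:=\{y_1,\dots,y_n\}$ is a line of $M$ with $n$ distinct elements such that $\mathrm{si}(M/L)$ (the simplification) is $3$-connected, and, for each $i$, $(L-y_i)\cup x_i$ is a cocircuit of $M$. $L$ is called the filament of the carambole. *)

theory Defs
  imports Main
begin

definition matroid :: "'a set \<Rightarrow> ('a set \<Rightarrow> bool) \<Rightarrow> bool" where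
  "matroid E indep \<longleftrightarrow> finite E \<and> indep {} \<and>
     (\<forall>X. indep X \<longrightarrow> X \<subseteq> E) \<and>
     (\<forall>X Y. indep X \<and> Y \<subseteq> X \<longrightarrow> indep Y) \<and>
     (\<forall>X Y. indep X \<and> indep Y \<and> card X < card Y \<longrightarrow> (\<exists>e \<in> Y - X. indep (insert e X)))"

definition rk :: "('a set \<Rightarrow> bool) \<Rightarrow> 'a set \<Rightarrow> nat" where
  "rk indep X = Max {card I | I. I \<subseteq> X \<and> indep I}"

definition circuit :: "'a set \<Rightarrow> ('a set \<Rightarrow> bool) \<Rightarrow> 'a set \<Rightarrow> bool" where
  "circuit E indep C \<longleftrightarrow> C \<subseteq> E \<and> \<not> indep C \<and> (\<forall>D. D \<subset> C \<longrightarrow> indep D)"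

text \<open>Cocircuit = circuit of the dual matroid: a minimal set D whose complement is not spanning.\<close>
definition cocircuit :: "'a set \<Rightarrow> ('a set \<Rightarrow> bool) \<Rightarrow> 'a set \<Rightarrow> bool" where
  "cocircuit E indep D \<longleftrightarrow> D \<subseteq> E \<and> rk indep (E - D) < rk indep E \<and>
     (\<forall>D'. D' \<subset> D \<longrightarrow> rk indep (E - D') = rk indep E)"

definition triangle :: "'a set \<Rightarrow> ('a set \<Rightarrow> bool) \<Rightarrow> 'a set \<Rightarrow> bool" where
  "triangle E indep T \<longleftrightarrow> circuit E indep T \<and> card T = 3"

definition line :: "'a set \<Rightarrow> ('a set \<Rightarrow> bool) \<Rightarrow> 'a set \<Rightarrow> bool" where
  "line E indep L \<longleftrightarrow> L \<subseteq> E \<and> rk indep L = 2"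

definition simple :: "'a set \<Rightarrow> ('a set \<Rightarrow> bool) \<Rightarrow> bool" where
  "simple E indep \<longleftrightarrow> (\<forall>X. X \<subseteq> E \<and> card X \<le> 2 \<longrightarrow> indep X)"

definition k_separation :: "'a set \<Rightarrow> ('a set \<Rightarrow> bool) \<Rightarrow> nat \<Rightarrow> 'a set \<Rightarrow> bool" where
  "k_separation E indep k X \<longleftrightarrow> X \<subseteq> E \<and> card X \<ge> k \<and> card (E - X) \<ge> k \<and>
     rk indep X + rk indep (E - X) < rk indep E + k"

definition three_connected :: "'a set \<Rightarrow> ('a set \<Rightarrow> bool) \<Rightarrow> bool" where
  "three_connected E indep \<longleftrightarrow> (\<forall>k X. 1 \<le> k \<and> k < 3 \<longrightarrow> \<not> k_separation E indep k X)"

definition contract_indep :: "'a set \<Rightarrow> ('a set \<Rightarrow> bool) \<Rightarrow> 'a set \<Rightarrow> 'a set \<Rightarrow> bool" where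
  "contract_indep E indep L X \<longleftrightarrow> X \<subseteq> E - L \<and> rk indep (X \<union> L) = card X + rk indep L"

definition restrict_indep :: "('a set \<Rightarrow> bool) \<Rightarrow> 'a set \<Rightarrow> 'a set \<Rightarrow> bool" where
  "restrict_indep indep S X \<longleftrightarrow> X \<subseteq> S \<and> indep X"

definition loop :: "'a set \<Rightarrow> ('a set \<Rightarrow> bool) \<Rightarrow> 'a \<Rightarrow> bool" where
  "loop E indep e \<longleftrightarrow> e \<in> E \<and> \<not> indep {e}"

definition par_eq :: "'a set \<Rightarrow> ('a set \<Rightarrow> bool) \<Rightarrow> 'a \<Rightarrow> 'a \<Rightarrow> bool" where
  "par_eq E indep e f \<longleftrightarrow> e \<in> E \<and> f \<in> E \<and> \<not> loop E indep e \<and> \<not> loop E indep f \<and>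
     rk indep {e, f} = 1"

definition simplification_set :: "'a set \<Rightarrow> ('a set \<Rightarrow> bool) \<Rightarrow> 'a set \<Rightarrow> bool" where
  "simplification_set E indep S \<longleftrightarrow> S \<subseteq> E \<and> (\<forall>s\<in>S. \<not> loop E indep s) \<and>
     (\<forall>e\<in>E. \<not> loop E indep e \<longrightarrow> (\<exists>!s. s \<in> S \<and> par_eq E indep e s))"

text \<open>si(M) is 3-connected (independent of the choice of simplification up to isomorphism).\<close>
definition si_three_connected :: "'a set \<Rightarrow> ('a set \<Rightarrow> bool) \<Rightarrow> bool" where
  "si_three_connected E indep \<longleftrightarrow>
     (\<exists>S. simplification_set E indep S \<and> three_connected S (restrict_indep indep S))"

definition carambole :: "'a set \<Rightarrow> ('a set \<Rightarrow> bool) \<Rightarrow> nat \<Rightarrow> (nat \<Rightarrow> 'a) \<Rightarrow> (nat \<Rightarrow> 'a) \<Rightarrow> bool" where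
  "carambole E indep n x y \<longleftrightarrow> n \<ge> 3 \<and>
     (\<forall>i\<in>{1..n}. x i \<in> E \<and> y i \<in> E) \<and>
     line E indep (y ` {1..n}) \<and> inj_on y {1..n} \<and>
     si_three_connected (E - y ` {1..n}) (contract_indep E indep (y ` {1..n})) \<and>
     (\<forall>i\<in>{1..n}. cocircuit E indep ((y ` {1..n} - {y i}) \<union> {x i}))"

end

theory Submission
  imports Defs
begin

text \<open>
  Write \<open>D\<^sub>i = (L - y\<^sub>i) \<union> x\<^sub>i\<close> for the cocircuits of the carambole; no \<open>y\<^sub>j\<close> with \<open>j \<noteq> i\<close>
  is spanned by the hyperplane \<open>E - D\<^sub>i\<close>. With submodularity this gives \<open>r (L \<union> e) = 3\<close> and
  \<open>r (L \<union> {e, f}) = 4\<close> for distinct \<open>e, f \<notin> L\<close>: otherwise either some \<open>y\<^sub>j\<close> is spanned by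
  some \<open>E - D\<^sub>i\<close>, or enough of the \<open>x\<^sub>i\<close> lie in \<open>{e, f}\<close> that \<open>L \<union> {e, f}\<close>, of rank at most
  \<open>3\<close>, has a complement of corank at least \<open>2\<close>, a \<open>2\<close>-separation of \<open>M\<close>. So \<open>M/L\<close> is simple,
  hence equal to its simplification, which is \<open>3\<close>-connected by hypothesis. A triangle \<open>T\<close>
  meeting \<open>L\<close> but not contained in it would, by submodularity of \<open>r\<close> on \<open>T\<close> and \<open>L\<close>, make
  \<open>T - L\<close> a dependent set of at most two elements of \<open>M/L\<close>; a triangle avoiding \<open>L\<close> and
  containing \<open>x\<^sub>i\<close> would span \<open>x\<^sub>i\<close> from the hyperplane \<open>E - D\<^sub>i\<close>.
\<close>

lemma card_le_rk_of_finite: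
  assumes "finite X" "I \<subseteq> X" "P I"
  shows "card I \<le> rk P X"
proof -
  have "finite {card I | I. I \<subseteq> X \<and> P I}"
    by (rule finite_subset[of _ "card ` Pow X"]) (auto simp: assms)
  then show ?thesis unfolding rk_def using assms by (intro Max_ge) auto
qed

lemma three_connected_if_simple_si_three_connected:
  assumes "finite E" "simple E P" "\<And>X. P X \<Longrightarrow> X \<subseteq> E" "si_three_connected E P"
  shows "three_connected E P"
proof -
  obtain S where S: "simplification_set E P S" "three_connected S (restrict_indep P S)"
    using assms(4) unfolding si_three_connected_def by blast
  have "e \<in> S" if e: "e \<in> E" for e
  proof -
    have "P {e}" using assms(2) e unfolding simple_def by simp
    then obtain s where s: "s \<in> S" "par_eq E P e s"
      using S(1) e unfolding simplification_set_def loop_def by blast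
    have "s = e"
    proof (rule ccontr)
      assume ne: "s \<noteq> e"
      have "P {e, s}"
        using assms(2) e s(2) unfolding simple_def par_eq_def by (simp add: card_insert_if)
      then have "card {e, s} \<le> rk P {e, s}" by (intro card_le_rk_of_finite) auto
      then show False using s(2) ne unfolding par_eq_def by simp
    qed
    then show ?thesis using s(1) by simp
  qed
  moreover have "S \<subseteq> E" using S(1) unfolding simplification_set_def by simp
  ultimately have "S = E" by blast
  moreover have "restrict_indep P E = P" using assms(3) by (auto simp: restrict_indep_def)
  ultimately show ?thesis using S(2) by simp
qed

locale indep_matroid =
  fixes E :: "'a set" and indep :: "'a set \<Rightarrow> bool"
  assumes matroid: "matroid E indep"
begin

abbreviation r :: "'a set \<Rightarrow> nat" where "r \<equiv> rk indep"

lemma finite_ground: "finite E"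
  and indep_empty: "indep {}"
  and indep_subset_ground: "indep X \<Longrightarrow> X \<subseteq> E"
  and indep_subset: "indep X \<Longrightarrow> Y \<subseteq> X \<Longrightarrow> indep Y"
  and indep_augment: "indep X \<Longrightarrow> indep Y \<Longrightarrow> card X < card Y \<Longrightarrow> \<exists>e \<in> Y - X. indep (insert e X)"
  using matroid unfolding matroid_def by blast+

lemma finite_indep: "indep X \<Longrightarrow> finite X"
  using indep_subset_ground finite_ground finite_subset by blast

lemma finite_rk_range: "finite {card I | I. I \<subseteq> X \<and> indep I}"
proof -
  have "{card I | I. I \<subseteq> X \<and> indep I} \<subseteq> card ` Pow E" using indep_subset_ground by auto
  then show ?thesis using finite_subset finite_ground by blast
qed

lemma card_le_rk: "I \<subseteq> X \<Longrightarrow> indep I \<Longrightarrow> card I \<le> r X"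
  unfolding rk_def by (intro Max_ge[OF finite_rk_range]) auto

lemma obtain_rk_basis:
  obtains I where "I \<subseteq> X" "indep I" "card I = r X"
proof -
  have "r X \<in> {card I | I. I \<subseteq> X \<and> indep I}"
    unfolding rk_def using indep_empty by (intro Max_in[OF finite_rk_range]) auto
  then show ?thesis using that by auto
qed

lemma rk_le_card: "finite X \<Longrightarrow> r X \<le> card X"
  by (metis obtain_rk_basis card_mono)

lemma rk_mono: "X \<subseteq> Y \<Longrightarrow> r X \<le> r Y"
  by (metis obtain_rk_basis card_le_rk order_trans)

lemma rk_indep: "indep X \<Longrightarrow> r X = card X"
  using card_le_rk[of X X] rk_le_card finite_indep by (simp add: le_antisym)

lemma extend_to_rk_basis:
  "I \<subseteq> Z \<Longrightarrow> indep I \<Longrightarrow> \<exists>J. I \<subseteq> J \<and> J \<subseteq> Z \<and> indep J \<and> card J = r Z"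
proof (induction "r Z - card I" arbitrary: I rule: less_induct)
  case less
  have le: "card I \<le> r Z" using card_le_rk less.prems by blast
  show ?case
  proof (cases "card I = r Z")
    case True
    then show ?thesis using less.prems by blast
  next
    case False
    obtain K where K: "K \<subseteq> Z" "indep K" "card K = r Z" by (rule obtain_rk_basis)
    have "card I < card K" using K(3) le False by simp
    then obtain e where e: "e \<in> K - I" "indep (insert e I)"
      using indep_augment[OF less.prems(2) K(2)] by blast
    have "card (insert e I) = card I + 1" using e finite_indep[OF less.prems(2)] by simp
    then have "r Z - card (insert e I) < r Z - card I" using le False by simp
    from less.hyps[OF this] obtain J where "insert e I \<subseteq> J" "J \<subseteq> Z" "indep J" "card J = r Z"
      using e K(1) less.prems(1) by blast
    then show ?thesis by blast
  qed
qed

lemma rk_submod: "r (X \<union> Y) + r (X \<inter> Y) \<le> r X + r Y"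
proof -
  obtain I where I: "I \<subseteq> X \<inter> Y" "indep I" "card I = r (X \<inter> Y)" by (rule obtain_rk_basis)
  obtain J where J: "I \<subseteq> J" "J \<subseteq> X \<union> Y" "indep J" "card J = r (X \<union> Y)"
    using extend_to_rk_basis[of I "X \<union> Y"] I by blast
  have finJ: "finite J" using finite_indep J(3) .
  have "r (X \<union> Y) + r (X \<inter> Y) \<le> card J + card (J \<inter> X \<inter> Y)"
    using I J card_mono[OF finite_subset[OF _ finJ], of "J \<inter> X \<inter> Y" I] by auto
  also have "\<dots> = card (J \<inter> X) + card (J \<inter> Y)"
  proof -
    have "(J \<inter> X) \<union> (J \<inter> Y) = J" "(J \<inter> X) \<inter> (J \<inter> Y) = J \<inter> X \<inter> Y" using J(2) by auto
    then show ?thesis using card_Un_Int[of "J \<inter> X" "J \<inter> Y"] finJ by simp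
  qed
  also have "\<dots> \<le> r X + r Y"
    by (intro add_mono card_le_rk indep_subset[OF J(3)]) auto
  finally show ?thesis .
qed

lemma rk_insert_le: "r (insert z X) \<le> r X + 1"
  using rk_submod[of X "{z}"] rk_le_card[of "{z}"] by simp

lemma rk_insert_le_mono:
  assumes "Y \<subseteq> X" "z \<notin> X" "r (insert z Y) \<le> r Y"
  shows "r (insert z X) \<le> r X"
proof -
  have "X \<union> insert z Y = insert z X" "X \<inter> insert z Y = Y" using assms(1,2) by auto
  then show ?thesis using rk_submod[of X "insert z Y"] assms(3) by simp
qed

lemma rk_circuit:
  assumes "circuit E indep C"
  shows "r C = card C - 1"
proof -
  have C: "C \<subseteq> E" "\<not> indep C" "\<And>D. D \<subset> C \<Longrightarrow> indep D"
    using assms unfolding circuit_def by auto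
  have fin: "finite C" using C(1) finite_ground finite_subset by blast
  have "C \<noteq> {}" using C(2) indep_empty by blast
  then obtain c where c: "c \<in> C" by blast
  have "card (C - {c}) \<le> r C" using C(3)[of "C - {c}"] c by (intro card_le_rk) auto
  moreover have "r C \<noteq> card C"
  proof
    assume "r C = card C"
    obtain I where I: "I \<subseteq> C" "indep I" "card I = r C" by (rule obtain_rk_basis)
    then have "I = C" using card_subset_eq[OF fin I(1)] \<open>r C = card C\<close> by simp
    then show False using I(2) C(2) by simp
  qed
  moreover have "r C \<le> card C" using rk_le_card fin .
  ultimately show ?thesis using c fin by simp
qed

lemma rk_cocircuit_compl_less: "cocircuit E indep D \<Longrightarrow> r (E - D) < r E"
  unfolding cocircuit_def by blast

lemma rk_compl_psubset_cocircuit: "cocircuit E indep D \<Longrightarrow> D' \<subset> D \<Longrightarrow> r (E - D') = r E"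
  unfolding cocircuit_def by blast

lemma rk_less_insert_cocircuit:
  assumes D: "cocircuit E indep D" and "Y \<subseteq> E - D" "z \<in> D"
  shows "r Y < r (insert z Y)"
proof (rule ccontr)
  assume "\<not> r Y < r (insert z Y)"
  then have "r (insert z (E - D)) \<le> r (E - D)"
    using rk_insert_le_mono[of Y "E - D" z] assms(2,3) by simp
  moreover have "D \<subseteq> E" using D unfolding cocircuit_def by simp
  then have "insert z (E - D) = E - (D - {z})" using assms(3) by blast
  moreover have "r (E - (D - {z})) = r E"
    using assms(3) by (intro rk_compl_psubset_cocircuit[OF D]) auto
  ultimately show False using rk_cocircuit_compl_less[OF D] by simp
qed

lemma three_connected_rk_sum_ge:
  assumes "three_connected E indep" "4 \<le> r E" "X \<subseteq> E" "2 \<le> card X" "r X \<le> 3"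
  shows "r E + 2 \<le> r X + r (E - X)"
proof (rule ccontr)
  assume sum: "\<not> r E + 2 \<le> r X + r (E - X)"
  consider "card (E - X) = 0" | "card (E - X) = 1" | "2 \<le> card (E - X)" by linarith
  then show False
  proof cases
    case 1
    then have "X = E" using assms(3) finite_ground by auto
    then show ?thesis using assms(2,5) by simp
  next
    case 2
    then obtain g where "E - X = {g}" by (rule card_1_singletonE)
    then have "E - {g} = X" "g \<in> E" using assms(3) by auto
    moreover have "r {g} \<le> 1" using rk_le_card[of "{g}"] by simp
    ultimately have "k_separation E indep 1 {g}"
      unfolding k_separation_def using assms(2,4,5) by simp
    then show ?thesis using assms(1) unfolding three_connected_def by auto
  next
    case 3
    then have "k_separation E indep 2 X"
      unfolding k_separation_def using assms(3,4) sum by simp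
    then show ?thesis using assms(1) unfolding three_connected_def by auto
  qed
qed

lemma three_connected_rk_ge_3_if_cocircuit_subset:
  assumes "three_connected E indep" "4 \<le> r E"
    and "cocircuit E indep D" "D \<subseteq> X" "X \<subseteq> E" "2 \<le> card X"
  shows "3 \<le> r X"
proof (rule ccontr)
  assume "\<not> 3 \<le> r X"
  moreover have "E - X \<subseteq> E - D" using assms(4) by blast
  then have "r (E - X) < r E"
    using rk_mono[of "E - X" "E - D"] rk_cocircuit_compl_less[OF assms(3)] by simp
  ultimately show False using three_connected_rk_sum_ge[OF assms(1,2,5,6)] by simp
qed

end

locale carambole_in_three_connected = indep_matroid +
  fixes n :: nat and x y :: "nat \<Rightarrow> 'a"
  assumes M_three_connected: "three_connected E indep"
    and M_simple: "simple E indep"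
    and M_rank: "4 \<le> rk indep E"
    and M_carambole: "carambole E indep n x y"
begin

abbreviation L :: "'a set" where "L \<equiv> y ` {1..n}"

abbreviation D :: "nat \<Rightarrow> 'a set" where "D i \<equiv> (L - {y i}) \<union> {x i}"

lemma n_ge_3: "3 \<le> n"
  using M_carambole unfolding carambole_def by blast

lemma x_in_ground: "i \<in> {1..n} \<Longrightarrow> x i \<in> E"
  using M_carambole unfolding carambole_def by blast

lemma y_in_ground: "i \<in> {1..n} \<Longrightarrow> y i \<in> E"
  using M_carambole unfolding carambole_def by blast

lemma rk_filament: "r L = 2"
  using M_carambole unfolding carambole_def line_def by blast

lemma inj_y: "inj_on y {1..n}"
  using M_carambole unfolding carambole_def by blast

lemma cocircuit_D: "i \<in> {1..n} \<Longrightarrow> cocircuit E indep (D i)"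
  using M_carambole unfolding carambole_def by blast

lemma si_contract_three_connected: "si_three_connected (E - L) (contract_indep E indep L)"
  using M_carambole unfolding carambole_def by blast

lemma y_in_filament: "i \<in> {1..n} \<Longrightarrow> y i \<in> L"
  by (rule imageI)

lemma filament_subset_ground: "L \<subseteq> E"
  using y_in_ground by blast

lemma card_filament: "card L = n"
  using card_image[OF inj_y] by simp

lemma exists_other_index: "i \<in> {1..n} \<Longrightarrow> \<exists>j\<in>{1..n}. j \<noteq> i"
proof (cases "i = 1")
  case True
  then show ?thesis using n_ge_3 by (intro bexI[of _ 2]) auto
next
  case False
  then show ?thesis using n_ge_3 by (intro bexI[of _ 1]) auto
qed

lemma y_neq: "i \<in> {1..n} \<Longrightarrow> j \<in> {1..n} \<Longrightarrow> i \<noteq> j \<Longrightarrow> y i \<noteq> y j"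
  using inj_on_eq_iff[OF inj_y] by blast

lemma y_in_D: "i \<in> {1..n} \<Longrightarrow> j \<in> {1..n} \<Longrightarrow> j \<noteq> i \<Longrightarrow> y j \<in> D i"
  using y_neq by blast

lemma rk_pair:
  assumes "a \<in> E" "b \<in> E" "a \<noteq> b" shows "r {a, b} = 2"
proof -
  have "indep {a, b}" using M_simple assms unfolding simple_def by (simp add: card_insert_if)
  then show ?thesis using rk_indep assms(3) by simp
qed

lemma x_notin_filament:
  assumes i: "i \<in> {1..n}" shows "x i \<notin> L"
proof
  assume "x i \<in> L"
  then have "D i \<subseteq> L" by blast
  moreover have "2 \<le> card L" using card_filament n_ge_3 by simp
  ultimately have "3 \<le> r L"
    using three_connected_rk_ge_3_if_cocircuit_subset[OF M_three_connected M_rank cocircuit_D[OF i]]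
      filament_subset_ground by blast
  then show False using rk_filament by simp
qed

lemma y_in_compl_D:
  assumes i: "i \<in> {1..n}" shows "y i \<in> E - D i"
proof -
  have "y i \<noteq> x i" using x_notin_filament[OF i] y_in_filament[OF i] by metis
  then show ?thesis using y_in_ground[OF i] by blast
qed

lemma rk_delete_x:
  assumes i: "i \<in> {1..n}" shows "r (E - {x i}) = r E"
proof -
  obtain j where j: "j \<in> {1..n}" "j \<noteq> i" using exists_other_index[OF i] by blast
  then have "y j \<in> D i" "y j \<noteq> x i"
    using y_in_D[OF i j(1)] x_notin_filament[OF i] y_in_filament[OF j(1)] by metis+
  then have "{x i} \<subset> D i" by blast
  then show ?thesis using rk_compl_psubset_cocircuit[OF cocircuit_D[OF i]] by blast
qed

lemma rk_insert_filament:
  assumes e: "e \<in> E - L" shows "r (insert e L) = 3"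
proof -
  have one: "1 \<in> {1..n}" and two: "2 \<in> {1..n}" using n_ge_3 by auto
  have "\<not> r (insert e L) \<le> 2"
  proof
    assume le2: "r (insert e L) \<le> 2"
    show False
    proof (cases "x 1 = e")
      case True
      then have "3 \<le> r (insert e L)"
        using filament_subset_ground e card_filament n_ge_3 card_mono[of "insert e L" L]
        by (intro three_connected_rk_ge_3_if_cocircuit_subset[OF M_three_connected M_rank
              cocircuit_D[OF one]]) auto
      then show False using le2 by simp
    next
      case False
      have "{y 1, e} \<subseteq> E - D 1" using y_in_compl_D[OF one] e False by auto
      have "2 = r {y 1, e}"
        using rk_pair y_in_ground[OF one] y_in_filament[OF one] e by force
      also have "\<dots> < r (insert (y 2) {y 1, e})"
        using rk_less_insert_cocircuit[OF cocircuit_D[OF one] \<open>{y 1, e} \<subseteq> E - D 1\<close>]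
          y_in_D[OF one two] by simp
      also have "\<dots> \<le> r (insert e L)" using one two by (intro rk_mono) auto
      finally show False using le2 by simp
    qed
  qed
  then show ?thesis using rk_insert_le[of e L] rk_filament by simp
qed

lemma rk_delete_filament_two_x:
  assumes i: "i \<in> {1..n}" and j: "j \<in> {1..n}" and ij: "i \<noteq> j"
  shows "r (E - L - {x i, x j}) + 2 \<le> r E"
proof (rule ccontr)
  define B where "B = E - L - {x i, x j}"
  assume "\<not> r (E - L - {x i, x j}) + 2 \<le> r E"
  then have rB: "r E \<le> r B + 1" unfolding B_def by simp
  have yi: "y i \<in> L" and yj: "y j \<in> L" and yij: "y i \<noteq> y j"
    using y_in_filament[OF i] y_in_filament[OF j] y_neq[OF i j ij] by auto
  have "insert (y i) B \<subseteq> E - D i" "insert (y j) B \<subseteq> E - D j"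
    unfolding B_def using y_in_compl_D[OF i] y_in_compl_D[OF j] by auto
  then have "r (insert (y i) B) < r E" "r (insert (y j) B) < r E"
    using rk_mono rk_cocircuit_compl_less[OF cocircuit_D[OF i]]
      rk_cocircuit_compl_less[OF cocircuit_D[OF j]] by (meson le_less_trans)+
  moreover have "insert (y i) B \<inter> insert (y j) B = B" using yij yi yj unfolding B_def by auto
  ultimately have "r (insert (y i) (insert (y j) B)) + 1 \<le> r E"
    using rk_submod[of "insert (y i) B" "insert (y j) B"] rB by (simp add: insert_commute)
  moreover have "insert (y i) (insert (y j) B) \<inter> L = {y i, y j}"
    "insert (y i) (insert (y j) B) \<union> L = B \<union> L"
    using yi yj unfolding B_def by auto
  ultimately have BL: "r (B \<union> L) + 1 \<le> r E"
    using rk_submod[of "insert (y i) (insert (y j) B)" L] rk_filament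
      rk_pair[OF y_in_ground[OF i] y_in_ground[OF j] yij] by simp
  show False
  proof (cases "x i = x j")
    case True
    then have "E - {x i} = B \<union> L"
      unfolding B_def using x_notin_filament[OF i] filament_subset_ground by auto
    then show False using rk_delete_x[OF i] BL by simp
  next
    case False
    have "(E - D i) \<union> (B \<union> L) = E - {x i}"
      unfolding B_def using filament_subset_ground x_notin_filament[OF i] x_in_ground[OF j] False
      by auto
    moreover have "(E - D i) \<inter> (B \<union> L) = insert (y i) B"
      unfolding B_def using x_notin_filament[OF j] y_in_compl_D[OF i] yi by auto
    moreover have "r B \<le> r (insert (y i) B)" by (rule rk_mono) blast
    ultimately show False
      using rk_submod[of "E - D i" "B \<union> L"] rk_delete_x[OF i]
        rk_cocircuit_compl_less[OF cocircuit_D[OF i]] BL rB by simp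
  qed
qed

lemma x_in_pair_if_rk_insert2_filament_le_3:
  assumes e: "e \<in> E - L" and f: "f \<in> E - L" and ef: "e \<noteq> f"
    and rk3: "r (insert e (insert f L)) \<le> 3"
    and i: "i \<in> {1..n}" and j: "j \<in> {1..n}" and ij: "i \<noteq> j"
  shows "x i \<in> {e, f} \<or> x j \<in> {e, f}"
proof -
  have spanned: "r {e, f, y k} \<le> 2" if k: "k \<in> {1..n}" and xk: "x k \<notin> {e, f}" for k
  proof (rule ccontr)
    assume "\<not> r {e, f, y k} \<le> 2"
    obtain l where l: "l \<in> {1..n}" "l \<noteq> k" using exists_other_index[OF k] by blast
    have "{e, f, y k} \<subseteq> E - D k" using e f xk y_in_compl_D[OF k] by auto
    then have "r {e, f, y k} < r (insert (y l) {e, f, y k})"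
      using rk_less_insert_cocircuit[OF cocircuit_D[OF k]] y_in_D[OF k l] by simp
    also have "\<dots> \<le> r (insert e (insert f L))"
      using y_in_filament[OF k] y_in_filament[OF l(1)] by (intro rk_mono) auto
    finally show False using rk3 \<open>\<not> r {e, f, y k} \<le> 2\<close> by simp
  qed
  show ?thesis
  proof (rule ccontr)
    assume "\<not> (x i \<in> {e, f} \<or> x j \<in> {e, f})"
    then have "r {e, f, y i} \<le> 2" "r {e, f, y j} \<le> 2" using spanned i j by blast+
    moreover have "{e, f, y i} \<inter> {e, f, y j} = {e, f}"
      "{e, f, y i} \<union> {e, f, y j} = {e, f, y i, y j}"
      using y_neq[OF i j ij] y_in_filament[OF i] e f by auto
    ultimately have "r {e, f, y i, y j} \<le> 2"
      using rk_submod[of "{e, f, y i}" "{e, f, y j}"] rk_pair[of e f] e f ef by simp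
    then have "r (insert e {y i, y j}) \<le> r {y i, y j}"
      using rk_mono[of "insert e {y i, y j}" "{e, f, y i, y j}"]
        rk_pair[OF y_in_ground[OF i] y_in_ground[OF j] y_neq[OF i j ij]] by auto
    moreover have "{y i, y j} \<subseteq> L" using y_in_filament[OF i] y_in_filament[OF j] by blast
    ultimately have "r (insert e L) \<le> r L" using rk_insert_le_mono e by blast
    then show False using rk_insert_filament[OF e] rk_filament by simp
  qed
qed

lemma rk_insert2_filament:
  assumes e: "e \<in> E - L" and f: "f \<in> E - L" and ef: "e \<noteq> f"
  shows "r (insert e (insert f L)) = 4"
proof -
  define X where "X = insert e (insert f L)"
  have "\<not> r X \<le> 3"
  proof
    assume rX: "r X \<le> 3"
    note x_in_pair = x_in_pair_if_rk_insert2_filament_le_3[OF e f ef rX[unfolded X_def]]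
    obtain i j where ij: "i \<in> {1..n}" "j \<in> {1..n}" "i \<noteq> j" "x i \<in> {e, f}" "x j \<in> {e, f}"
    proof -
      have idx: "1 \<in> {1..n}" "2 \<in> {1..n}" "3 \<in> {1..n}" using n_ge_3 by auto
      show thesis
      proof (cases "x 1 \<in> {e, f}")
        case True
        then show thesis
          using that[OF idx(1,2)] that[OF idx(1,3)] x_in_pair[OF idx(2,3)] by auto
      next
        case False
        then show thesis
          using that[OF idx(2,3)] x_in_pair[OF idx(1,2)] x_in_pair[OF idx(1,3)] by auto
      qed
    qed
    have "E - X \<subseteq> E - L - {x i, x j}" using ij(4,5) unfolding X_def by auto
    then have "r (E - X) + 2 \<le> r E"
      using rk_mono rk_delete_filament_two_x[OF ij(1-3)] by (meson add_le_mono1 le_trans)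
    moreover have XE: "X \<subseteq> E" using e f filament_subset_ground unfolding X_def by auto
    moreover have "2 \<le> card X"
    proof -
      have "card L \<le> card X"
        using XE finite_ground by (intro card_mono) (auto simp: X_def finite_subset)
      then show ?thesis using card_filament n_ge_3 by simp
    qed
    ultimately show False
      using three_connected_rk_sum_ge[OF M_three_connected M_rank XE _ rX] rX by simp
  qed
  moreover have "r X \<le> 4"
    using rk_insert_le[of e "insert f L"] rk_insert_filament[OF f] unfolding X_def by simp
  ultimately show ?thesis unfolding X_def by simp
qed

lemma simple_contract_filament: "simple (E - L) (contract_indep E indep L)"
  unfolding simple_def
proof (intro allI impI, elim conjE)
  fix X assume X: "X \<subseteq> E - L" "card X \<le> 2"
  have "finite X" using X(1) finite_ground finite_subset by blast
  consider "X = {}" | e where "X = {e}" | e f where "X = {e, f}" "e \<noteq> f"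
  proof -
    consider "card X = 0" | "card X = 1" | "card X = 2" using X(2) by linarith
    then show thesis
    proof cases
      case 1
      then show thesis using that(1) \<open>finite X\<close> by simp
    next
      case 2
      then show thesis using that(2) by (metis card_1_singletonE)
    next
      case 3
      then show thesis using that(3) by (metis card_2_iff)
    qed
  qed
  then show "contract_indep E indep L X"
  proof cases
    case (2 e)
    then show ?thesis using X(1) rk_insert_filament[of e] rk_filament
      by (simp add: contract_indep_def)
  next
    case (3 e f)
    then show ?thesis using X(1) rk_insert2_filament[of e f] rk_filament
      by (simp add: contract_indep_def)
  qed (simp add: contract_indep_def)
qed

lemma contract_filament_three_connected: "three_connected (E - L) (contract_indep E indep L)"
  using finite_ground simple_contract_filament si_contract_three_connected
  by (intro three_connected_if_simple_si_three_connected) (auto simp: contract_indep_def)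

lemma triangle_subset_filament:
  assumes T: "triangle E indep T" and meets: "T \<inter> (x ` {1..n} \<union> L) \<noteq> {}"
  shows "T \<subseteq> L"
proof (rule ccontr)
  assume "\<not> T \<subseteq> L"
  have TE: "T \<subseteq> E" and cT: "card T = 3" and proper: "\<And>U. U \<subset> T \<Longrightarrow> indep U"
    using T unfolding triangle_def circuit_def by auto
  have fin: "finite T" using TE finite_ground finite_subset by blast
  have rT: "r T = 2" using rk_circuit T cT unfolding triangle_def by simp
  show False
  proof (cases "T \<inter> L = {}")
    case True
    then obtain i where i: "i \<in> {1..n}" "x i \<in> T" using meets by blast
    have "T - {x i} \<subseteq> E - D i" using True TE by blast
    then have "r (T - {x i}) < r (insert (x i) (T - {x i}))"
      by (rule rk_less_insert_cocircuit[OF cocircuit_D[OF i(1)]]) simp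
    moreover have "insert (x i) (T - {x i}) = T" using i by blast
    moreover have "r (T - {x i}) = 2"
      using rk_indep[OF proper[of "T - {x i}"]] i cT fin by auto
    ultimately show False using rT by simp
  next
    case False
    have rk_TL: "r (T \<inter> L) = card (T \<inter> L)" using rk_indep proper \<open>\<not> T \<subseteq> L\<close> by blast
    have card_T: "card (T \<inter> L) + card (T - L) = 3" using card_Int_Diff[OF fin, of L] cT by simp
    moreover have "card (T \<inter> L) \<noteq> 0" using False fin by simp
    ultimately have "card (T - L) \<le> 2" by linarith
    moreover have "T - L \<subseteq> E - L" using TE by blast
    ultimately have "contract_indep E indep L (T - L)"
      using simple_contract_filament unfolding simple_def by blast
    then have "r ((T - L) \<union> L) = card (T - L) + r L" unfolding contract_indep_def by blast
    moreover have "(T - L) \<union> L = T \<union> L" by blast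
    ultimately show False using rk_submod[of T L] rT rk_filament rk_TL card_T by simp
  qed
qed

end

theorem corollary4p3:
  fixes E :: "'a set" and indep :: "'a set \<Rightarrow> bool"
    and n :: nat and x y :: "nat \<Rightarrow> 'a"
  assumes "matroid E indep"
    and "three_connected E indep"
    and "simple E indep"
    and "rk indep E \<ge> 4"
    and "carambole E indep n x y"
  shows "three_connected (E - y ` {1..n}) (contract_indep E indep (y ` {1..n}))
     \<and> (\<forall>T. triangle E indep T \<and> T \<inter> (x ` {1..n} \<union> y ` {1..n}) \<noteq> {} \<longrightarrow> T \<subseteq> y ` {1..n})"
proof -
  interpret carambole_in_three_connected E indep n x y
    using assms by unfold_locales (auto simp: indep_matroid_def)
  show ?thesis using contract_filament_three_connected triangle_subset_filament by blast
qed

end
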